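(* Let $G$ be a simple connected graph with $N\ge 2$ nodes. Then $\gamma(G)=1$ if and only if $G$ is a path (linear graph).
   Context: All graphs are simple, undirected and connected. $h_{ij}$ is the shortest-path distance. For an ordered landmark set $\mathcal{M}=\{A_1,\dots,A_m\}\subseteq\mathcal{V}$, $\mathbf{P}_{\mathcal{M}}(i)=\langle h_{iA_1},\dots,h_{iA_m}\rangle$ and $\mathbf{P}_{\mathcal{M}}$ is the matrix with these rows. $\mathcal{M}$ is a construction set of $G$ if $G$ is the unique simple connected graph on $\mathcal{V}$ whose distance vector matrix for landmarks $\mathcal{M}$ equals $\mathbf{P}_{\mathcal{M}}$. The link dimension $\gamma(G)$ is the minimum cardinality of a construction set. *)

theory Defs
  imports Main
begin

definition simple_graph :: "'a set \<Rightarrow> ('a \<Rightarrow> 'a \<Rightarrow> bool) \<Rightarrow> bool" where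
  "simple_graph V E \<longleftrightarrow>
     (\<forall>u v. E u v \<longrightarrow> u \<in> V \<and> v \<in> V) \<and>
     (\<forall>u v. E u v \<longrightarrow> E v u) \<and>
     (\<forall>u. \<not> E u u)"

inductive walk :: "('a \<Rightarrow> 'a \<Rightarrow> bool) \<Rightarrow> nat \<Rightarrow> 'a \<Rightarrow> 'a \<Rightarrow> bool"
  for E :: "'a \<Rightarrow> 'a \<Rightarrow> bool" where
  walk_nil: "walk E 0 u u"
| walk_step: "E u w \<Longrightarrow> walk E n w v \<Longrightarrow> walk E (Suc n) u v"

definition connected_graph :: "'a set \<Rightarrow> ('a \<Rightarrow> 'a \<Rightarrow> bool) \<Rightarrow> bool" where
  "connected_graph V E \<longleftrightarrow> (\<forall>u\<in>V. \<forall>v\<in>V. \<exists>n. walk E n u v)"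

definition simple_connected_graph :: "'a set \<Rightarrow> ('a \<Rightarrow> 'a \<Rightarrow> bool) \<Rightarrow> bool" where
  "simple_connected_graph V E \<longleftrightarrow> simple_graph V E \<and> connected_graph V E"

definition hop :: "('a \<Rightarrow> 'a \<Rightarrow> bool) \<Rightarrow> 'a \<Rightarrow> 'a \<Rightarrow> nat" where
  "hop E u v = (LEAST n. walk E n u v)"

definition dist_vec :: "('a \<Rightarrow> 'a \<Rightarrow> bool) \<Rightarrow> 'a list \<Rightarrow> 'a \<Rightarrow> nat list" where
  "dist_vec E M i = map (hop E i) M"

definition construction_set :: "'a set \<Rightarrow> ('a \<Rightarrow> 'a \<Rightarrow> bool) \<Rightarrow> 'a list \<Rightarrow> bool" where
  "construction_set V E M \<longleftrightarrow>
     M \<noteq> [] \<and> distinct M \<and> set M \<subseteq> V \<and>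
     (\<forall>E'. simple_connected_graph V E' \<and> (\<forall>i\<in>V. dist_vec E' M i = dist_vec E M i)
            \<longrightarrow> E' = E)"

definition link_dim :: "'a set \<Rightarrow> ('a \<Rightarrow> 'a \<Rightarrow> bool) \<Rightarrow> nat" where
  "link_dim V E = (LEAST m. \<exists>M. construction_set V E M \<and> length M = m)"

definition is_path_graph :: "'a set \<Rightarrow> ('a \<Rightarrow> 'a \<Rightarrow> bool) \<Rightarrow> bool" where
  "is_path_graph V E \<longleftrightarrow>
     (\<exists>vs. distinct vs \<and> set vs = V \<and>
        (\<forall>u v. E u v \<longleftrightarrow> (\<exists>i. Suc i < length vs \<and> {u, v} = {vs ! i, vs ! Suc i})))"

end

theory Submission
  imports Defs
begin

text \<open>With a single landmark \<open>A\<close> the distance vector matrix is the level function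
  \<open>v \<mapsto> h\<^sub>v\<^sub>A\<close>. Level functions are characterised locally: \<open>A\<close> is the only vertex on
  level 0, every other vertex has a neighbour one level lower, and no edge climbs more than one
  level. If two distinct vertices share a level, toggling the edge between them keeps these
  conditions, hence all distances to \<open>A\<close>, so \<open>[A]\<close> is not a construction set. If all levels
  are distinct, every edge joins consecutive levels and each level is a single vertex, so the
  graph is the path listed by level; conversely the distances from an end of a path are
  distinct. Since the full vertex list is always a construction set, \<open>\<gamma>(G) = 1\<close> means that some
  single landmark is one.\<close>

lemma walk_0_iff: "walk E 0 u v \<longleftrightarrow> u = v"
  by (auto elim: walk.cases intro: walk.intros)

lemma walk_Suc_iff: "walk E (Suc n) u v \<longleftrightarrow> (\<exists>w. E u w \<and> walk E n w v)"
  by (auto elim: walk.cases intro: walk.intros)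

lemma walk_1_iff: "walk E 1 u v \<longleftrightarrow> E u v"
  by (simp add: walk_Suc_iff walk_0_iff)

lemma walk_append: "walk E n u v \<Longrightarrow> walk E m v w \<Longrightarrow> walk E (n + m) u w"
  by (induction rule: walk.induct) (auto intro: walk.walk_step)

lemma walk_reverse:
  assumes "simple_graph V E" and "walk E n u v"
  shows "walk E n v u"
  using assms(2)
proof (induction rule: walk.induct)
  case (walk_step u w n v)
  have "walk E 1 w u"
    using \<open>E u w\<close> assms(1) by (auto simp: simple_graph_def walk_Suc_iff walk_0_iff)
  from walk_append[OF walk_step.IH this] show ?case by simp
qed (rule walk.walk_nil)

lemma walk_hop:
  assumes "simple_connected_graph V E" and "u \<in> V" and "v \<in> V"
  shows "walk E (hop E u v) u v"
  unfolding hop_def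
  by (rule LeastI_ex) (use assms in \<open>auto simp: simple_connected_graph_def connected_graph_def\<close>)

lemma hop_le_walk: "walk E n u v \<Longrightarrow> hop E u v \<le> n"
  unfolding hop_def by (rule Least_le)

lemma adjacent_iff_hop_eq_1:
  assumes "simple_connected_graph V E"
  shows "E u v \<longleftrightarrow> u \<in> V \<and> v \<in> V \<and> hop E u v = 1"
proof
  assume "E u v"
  then have uv: "u \<in> V" "v \<in> V" "u \<noteq> v"
    using assms by (auto simp: simple_connected_graph_def simple_graph_def)
  have "hop E u v \<le> 1"
    using \<open>E u v\<close> hop_le_walk walk_1_iff by metis
  moreover have "hop E u v \<noteq> 0"
    using walk_hop[OF assms uv(1,2)] uv(3) by (metis walk_0_iff)
  ultimately show "u \<in> V \<and> v \<in> V \<and> hop E u v = 1"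
    using uv by simp
next
  assume "u \<in> V \<and> v \<in> V \<and> hop E u v = 1"
  then show "E u v"
    using walk_hop[OF assms] by (metis walk_1_iff)
qed

definition distance_labelling :: "'a set \<Rightarrow> ('a \<Rightarrow> 'a \<Rightarrow> bool) \<Rightarrow> 'a \<Rightarrow> ('a \<Rightarrow> nat) \<Rightarrow> bool"
  where "distance_labelling V E A d \<longleftrightarrow>
    A \<in> V \<and> d A = 0 \<and> (\<forall>v\<in>V. d v = 0 \<longrightarrow> v = A) \<and>
    (\<forall>v\<in>V. 0 < d v \<longrightarrow> (\<exists>w\<in>V. E v w \<and> d w + 1 = d v)) \<and>
    (\<forall>u\<in>V. \<forall>v\<in>V. E u v \<longrightarrow> d u \<le> d v + 1)"

lemma distance_labelling_hop:
  assumes sc: "simple_connected_graph V E" and "A \<in> V"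
  shows "distance_labelling V E A (\<lambda>v. hop E v A)"
  unfolding distance_labelling_def
proof (intro conjI ballI impI)
  show "A \<in> V" by fact
  show "hop E A A = 0"
    using hop_le_walk[OF walk.walk_nil, of E A] by simp
  show "v = A" if "v \<in> V" "hop E v A = 0" for v
    using walk_hop[OF sc that(1) \<open>A \<in> V\<close>] that(2) by (simp add: walk_0_iff)
  show "hop E u A \<le> hop E v A + 1" if "u \<in> V" "v \<in> V" "E u v" for u v
  proof -
    have "walk E (Suc (hop E v A)) u A"
      using walk_hop[OF sc that(2) \<open>A \<in> V\<close>] that(3) walk.walk_step by metis
    then show ?thesis using hop_le_walk by fastforce
  qed
  show "\<exists>w\<in>V. E v w \<and> hop E w A + 1 = hop E v A" if v: "v \<in> V" and pos: "0 < hop E v A" for v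
  proof -
    obtain n where n: "hop E v A = Suc n"
      using pos gr0_implies_Suc by blast
    then obtain w where w: "E v w" "walk E n w A"
      using walk_hop[OF sc v \<open>A \<in> V\<close>] by (auto simp: walk_Suc_iff)
    have "w \<in> V"
      using w(1) sc by (simp add: simple_connected_graph_def simple_graph_def)
    have "walk E (Suc (hop E w A)) v A"
      using walk_hop[OF sc \<open>w \<in> V\<close> \<open>A \<in> V\<close>] w(1) walk.walk_step by metis
    with hop_le_walk[OF w(2)] hop_le_walk n \<open>w \<in> V\<close> w(1) show ?thesis
      by (metis Suc_eq_plus1 le_antisym not_less_eq_eq)
  qed
qed

lemma distance_labellingD:
  assumes "distance_labelling V E A d"
  shows "A \<in> V" and "d A = 0" and "\<And>v. v \<in> V \<Longrightarrow> d v = 0 \<Longrightarrow> v = A"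
    and "\<And>v. v \<in> V \<Longrightarrow> 0 < d v \<Longrightarrow> \<exists>w\<in>V. E v w \<and> d w + 1 = d v"
    and "\<And>u v. u \<in> V \<Longrightarrow> v \<in> V \<Longrightarrow> E u v \<Longrightarrow> d u \<le> d v + 1"
  using assms unfolding distance_labelling_def by blast+

lemma distance_labelling_cong:
  assumes "\<And>v. v \<in> V \<Longrightarrow> d v = d' v"
  shows "distance_labelling V E A d \<longleftrightarrow> distance_labelling V E A d'"
  using assms unfolding distance_labelling_def by auto

lemma walk_to_root:
  assumes dl: "distance_labelling V E A d" and "v \<in> V"
  shows "walk E (d v) v A"
proof -
  have "walk E k v A" if "v \<in> V" "d v = k" for k v
    using that
  proof (induction k arbitrary: v)
    case 0
    then show ?case
      using distance_labellingD(3)[OF dl] by (auto intro: walk.walk_nil)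
  next
    case (Suc k)
    then obtain w where "w \<in> V" "E v w" "d w + 1 = d v"
      using distance_labellingD(4)[OF dl] by (metis zero_less_Suc)
    with Suc show ?case by (auto intro: walk.walk_step)
  qed
  with assms(2) show ?thesis by blast
qed

lemma distance_labelling_le_walk:
  assumes sg: "simple_graph V E" and dl: "distance_labelling V E A d"
    and "walk E n v A" and "v \<in> V"
  shows "d v \<le> n"
proof -
  have "d v \<le> n" if "walk E n v w" "w = A" "v \<in> V" for n v w
    using that
  proof (induction rule: walk.induct)
    case (walk_nil u)
    then show ?case using distance_labellingD(2)[OF dl] by simp
  next
    case (walk_step u w n v)
    then have "w \<in> V"
      using sg by (auto simp: simple_graph_def)
    with walk_step distance_labellingD(5)[OF dl] show ?case by fastforce
  qed
  with assms(3,4) show ?thesis by blast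
qed

lemma hop_eq_distance_labelling:
  assumes "simple_graph V E" and "distance_labelling V E A d" and "v \<in> V"
  shows "hop E v A = d v"
  unfolding hop_def
proof (rule Least_equality)
  show "walk E (d v) v A"
    using walk_to_root assms(2,3) .
  show "d v \<le> n" if "walk E n v A" for n
    using distance_labelling_le_walk[OF assms(1,2) that assms(3)] .
qed

lemma connected_graph_if_distance_labelling:
  assumes "simple_graph V E" and "distance_labelling V E A d"
  shows "connected_graph V E"
  unfolding connected_graph_def
proof (intro ballI)
  fix u v assume "u \<in> V" "v \<in> V"
  then have "walk E (d u) u A" "walk E (d v) A v"
    using walk_to_root[OF assms(2)] walk_reverse[OF assms(1)] by blast+
  then show "\<exists>n. walk E n u v" by (blast intro: walk_append)
qed

text \<open>When no two vertices share a level, the levels determine the graph: every edge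
  joins consecutive levels, and a vertex on level \<open>k + 1\<close> must be adjacent to the only
  vertex on level \<open>k\<close>.\<close>

lemma adjacent_iff_consecutive_levels:
  assumes sg: "simple_graph V E" and dl: "distance_labelling V E A d" and inj: "inj_on d V"
  shows "E u v \<longleftrightarrow> u \<in> V \<and> v \<in> V \<and> (d v = Suc (d u) \<or> d u = Suc (d v))"
proof
  assume "E u v"
  then have uv: "u \<in> V" "v \<in> V" "u \<noteq> v" "E v u"
    using sg by (auto simp: simple_graph_def)
  then have "d u \<noteq> d v"
    using inj by (auto dest: inj_onD)
  moreover have "d u \<le> d v + 1" "d v \<le> d u + 1"
    using distance_labellingD(5)[OF dl] uv \<open>E u v\<close> by blast+
  ultimately show "u \<in> V \<and> v \<in> V \<and> (d v = Suc (d u) \<or> d u = Suc (d v))"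
    using uv by auto
next
  have parent: "E y x" if x: "x \<in> V" and y: "y \<in> V" and level: "d y = Suc (d x)" for x y
  proof -
    obtain w where "w \<in> V" "E y w" "d w + 1 = d y"
      using distance_labellingD(4)[OF dl y] level by auto
    with x level inj show ?thesis by (metis Suc_eq_plus1 inj_onD nat.inject)
  qed
  have sym: "E x y" if "E y x" for x y
    using that sg by (simp add: simple_graph_def)
  assume "u \<in> V \<and> v \<in> V \<and> (d v = Suc (d u) \<or> d u = Suc (d v))"
  then show "E u v"
    using parent sym by blast
qed

definition toggle_edge :: "('a \<Rightarrow> 'a \<Rightarrow> bool) \<Rightarrow> 'a \<Rightarrow> 'a \<Rightarrow> 'a \<Rightarrow> 'a \<Rightarrow> bool"
  where "toggle_edge E u w a b = (if {a, b} = {u, w} then \<not> E u w else E a b)"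

lemma simple_graph_toggle_edge:
  assumes "simple_graph V E" and "u \<in> V" and "w \<in> V" and "u \<noteq> w"
  shows "simple_graph V (toggle_edge E u w)"
  using assms unfolding simple_graph_def toggle_edge_def
  by (auto simp: doubleton_eq_iff)

text \<open>The toggled pair lies inside one level, so it is never a parent edge and never
  climbs a level.\<close>

lemma distance_labelling_toggle_edge:
  assumes dl: "distance_labelling V E A d" and level: "d u = d w"
  shows "distance_labelling V (toggle_edge E u w) A d"
proof -
  have "\<exists>x\<in>V. toggle_edge E u w v x \<and> d x + 1 = d v" if v: "v \<in> V" "0 < d v" for v
  proof -
    obtain x where x: "x \<in> V" "E v x" "d x + 1 = d v"
      using distance_labellingD(4)[OF dl v] by blast
    then have "{v, x} \<noteq> {u, w}"
      using level by (auto simp: doubleton_eq_iff)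
    with x show ?thesis by (auto simp: toggle_edge_def)
  qed
  moreover have "d a \<le> d b + 1"
    if ab: "a \<in> V" "b \<in> V" and e: "toggle_edge E u w a b" for a b
  proof (cases "{a, b} = {u, w}")
    case True
    then show ?thesis using level by (auto simp: doubleton_eq_iff)
  next
    case False
    with e have "E a b" by (simp add: toggle_edge_def)
    then show ?thesis
      using distance_labellingD(5)[OF dl ab] by blast
  qed
  ultimately show ?thesis
    using distance_labellingD(1-3)[OF dl] unfolding distance_labelling_def by blast
qed

lemma construction_set_singleton_iff:
  assumes sc: "simple_connected_graph V E"
  shows "construction_set V E [A] \<longleftrightarrow> A \<in> V \<and> inj_on (\<lambda>v. hop E v A) V"
proof -
  have sg: "simple_graph V E"
    using sc by (simp add: simple_connected_graph_def)
  define d where "d = (\<lambda>v. hop E v A)"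
  have same_profile_iff: "(\<forall>i\<in>V. dist_vec E' [A] i = dist_vec E [A] i) \<longleftrightarrow>
      (\<forall>v\<in>V. hop E' v A = d v)" for E'
    by (simp add: dist_vec_def d_def)
  show ?thesis
  proof
    assume cs: "construction_set V E [A]"
    then have "A \<in> V"
      by (simp add: construction_set_def)
    then have dl: "distance_labelling V E A d"
      using distance_labelling_hop[OF sc] by (simp add: d_def)
    have "inj_on d V"
    proof (rule inj_onI, rule ccontr)
      fix u w assume uw: "u \<in> V" "w \<in> V" "d u = d w" "u \<noteq> w"
      define E' where "E' = toggle_edge E u w"
      have sg': "simple_graph V E'"
        using simple_graph_toggle_edge[OF sg uw(1,2,4)] by (simp add: E'_def)
      have dl': "distance_labelling V E' A d"
        using distance_labelling_toggle_edge[OF dl uw(3)] by (simp add: E'_def)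
      have "simple_connected_graph V E'"
        using sg' connected_graph_if_distance_labelling[OF sg' dl']
        by (simp add: simple_connected_graph_def)
      moreover have "\<forall>v\<in>V. hop E' v A = d v"
        using hop_eq_distance_labelling[OF sg' dl'] by blast
      ultimately have "E' = E"
        using cs same_profile_iff by (simp add: construction_set_def)
      moreover have "E' u w \<noteq> E u w"
        using uw(4) by (simp add: E'_def toggle_edge_def)
      ultimately show False by simp
    qed
    with \<open>A \<in> V\<close> show "A \<in> V \<and> inj_on (\<lambda>v. hop E v A) V"
      by (simp add: d_def)
  next
    assume A: "A \<in> V \<and> inj_on (\<lambda>v. hop E v A) V"
    then have dl: "distance_labelling V E A d" and inj: "inj_on d V"
      using distance_labelling_hop[OF sc] by (simp_all add: d_def)
    have "E' = E" if sc': "simple_connected_graph V E'" and hop': "\<forall>v\<in>V. hop E' v A = d v" for E'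
    proof -
      have sg': "simple_graph V E'"
        using sc' by (simp add: simple_connected_graph_def)
      have "distance_labelling V E' A (\<lambda>v. hop E' v A)"
        using distance_labelling_hop[OF sc'] A by blast
      then have dl': "distance_labelling V E' A d"
        using distance_labelling_cong[of V "\<lambda>v. hop E' v A" d] hop' by simp
      show "E' = E"
        using adjacent_iff_consecutive_levels[OF sg' dl' inj]
          adjacent_iff_consecutive_levels[OF sg dl inj] by (intro ext) simp
    qed
    with A show "construction_set V E [A]"
      unfolding construction_set_def same_profile_iff by auto
  qed
qed

lemma downward_closed_eq_lessThan_card:
  fixes S :: "nat set"
  assumes "finite S" and down: "\<And>k j. k \<in> S \<Longrightarrow> j \<le> k \<Longrightarrow> j \<in> S"
  shows "S = {..<card S}"
proof -
  have "S \<subseteq> {..<card S}"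
  proof
    fix k assume "k \<in> S"
    then have "{..k} \<subseteq> S"
      using down by auto
    then have "card {..k} \<le> card S"
      using card_mono[OF \<open>finite S\<close>] by blast
    then show "k \<in> {..<card S}" by simp
  qed
  then show ?thesis
    by (simp add: card_subset_eq)
qed

lemma image_distance_labelling:
  assumes "finite V" and dl: "distance_labelling V E A d"
  shows "d ` V = {..<card (d ` V)}"
proof (rule downward_closed_eq_lessThan_card)
  show "finite (d ` V)" using \<open>finite V\<close> by simp
  show "j \<in> d ` V" if "k \<in> d ` V" "j \<le> k" for k j
    using that
  proof (induction k arbitrary: j)
    case (Suc k)
    then obtain v where "v \<in> V" "d v = Suc k" by auto
    then obtain w where "w \<in> V" "d w = k"
      using distance_labellingD(4)[OF dl] by (metis add_right_cancel Suc_eq_plus1 zero_less_Suc)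
    then have "k \<in> d ` V" by blast
    with Suc show ?case by (metis le_Suc_eq)
  qed simp
qed

lemma is_path_graph_iff_levels:
  "is_path_graph V E \<longleftrightarrow>
    (\<exists>d. bij_betw d V {..<card V} \<and>
      (\<forall>u v. E u v \<longleftrightarrow> u \<in> V \<and> v \<in> V \<and> (d v = Suc (d u) \<or> d u = Suc (d v))))"
  (is "_ \<longleftrightarrow> (\<exists>d. ?levels d)")
proof
  assume "is_path_graph V E"
  then obtain vs where vs: "distinct vs" "set vs = V"
    and edges: "\<And>u v. E u v \<longleftrightarrow> (\<exists>i. Suc i < length vs \<and> {u, v} = {vs ! i, vs ! Suc i})"
    unfolding is_path_graph_def by blast
  have n: "length vs = card V"
    using distinct_card vs by metis
  have bij: "bij_betw ((!) vs) {..<card V} V"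
    using bij_betw_nth[OF vs(1)] vs(2) n by simp
  define d where "d = the_inv_into {..<card V} ((!) vs)"
  have d_nth: "d (vs ! i) = i" if "i < card V" for i
    using the_inv_into_f_f[OF bij_betw_imp_inj_on[OF bij]] that by (simp add: d_def)
  have nth_d: "vs ! d v = v" "d v < card V" if "v \<in> V" for v
    using f_the_inv_into_f_bij_betw[OF bij] bij_betw_apply[OF bij_betw_the_inv_into[OF bij]] that
    by (simp_all add: d_def)
  have "E u v \<longleftrightarrow> u \<in> V \<and> v \<in> V \<and> (d v = Suc (d u) \<or> d u = Suc (d v))" for u v
  proof
    assume "E u v"
    then obtain i where i: "Suc i < card V" "{u, v} = {vs ! i, vs ! Suc i}"
      using edges n by auto
    moreover have "vs ! i \<in> V" "vs ! Suc i \<in> V"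
      using i(1) n vs(2) by auto
    ultimately show "u \<in> V \<and> v \<in> V \<and> (d v = Suc (d u) \<or> d u = Suc (d v))"
      using d_nth[of i] d_nth[of "Suc i"] by (auto simp: doubleton_eq_iff)
  next
    assume "u \<in> V \<and> v \<in> V \<and> (d v = Suc (d u) \<or> d u = Suc (d v))"
    then have "\<exists>i. Suc i < card V \<and> {u, v} = {vs ! i, vs ! Suc i}"
      using nth_d by (metis insert_commute)
    then show "E u v"
      using edges n by simp
  qed
  then have "?levels d"
    using bij_betw_the_inv_into[OF bij] by (simp add: d_def)
  then show "\<exists>d. ?levels d" by blast
next
  assume "\<exists>d. ?levels d"
  then obtain d where bij: "bij_betw d V {..<card V}"
    and edges: "\<And>u v. E u v \<longleftrightarrow> u \<in> V \<and> v \<in> V \<and> (d v = Suc (d u) \<or> d u = Suc (d v))"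
    by blast
  define g where "g = inv_into V d"
  have g: "bij_betw g {..<card V} V"
    using bij_betw_inv_into[OF bij] by (simp add: g_def)
  have d_g: "d (g i) = i" if "i < card V" for i
    using bij_betw_inv_into_right[OF bij] that by (simp add: g_def)
  define vs where "vs = map g [0..<card V]"
  have "distinct vs"
    using bij_betw_imp_inj_on[OF g] by (simp add: vs_def distinct_map atLeast0LessThan)
  moreover have "set vs = V"
    using bij_betw_imp_surj_on[OF g] by (simp add: vs_def atLeast0LessThan)
  moreover have "E u v \<longleftrightarrow> (\<exists>i. Suc i < length vs \<and> {u, v} = {vs ! i, vs ! Suc i})" for u v
  proof
    assume "E u v"
    then have uv: "u \<in> V" "v \<in> V" and "d v = Suc (d u) \<or> d u = Suc (d v)"
      using edges by blast+
    moreover have "g (d u) = u" "g (d v) = v" "d u < card V" "d v < card V"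
      using uv bij_betw_inv_into_left[OF bij] bij_betw_apply[OF bij] by (simp_all add: g_def)
    ultimately show "\<exists>i. Suc i < length vs \<and> {u, v} = {vs ! i, vs ! Suc i}"
      by (auto simp: vs_def insert_commute)
  next
    assume "\<exists>i. Suc i < length vs \<and> {u, v} = {vs ! i, vs ! Suc i}"
    then obtain i where i: "Suc i < card V" "{u, v} = {g i, g (Suc i)}"
      by (auto simp: vs_def)
    moreover have "g i \<in> V" "g (Suc i) \<in> V"
      using i(1) bij_betw_apply[OF g] by simp_all
    ultimately show "E u v"
      using edges d_g[of i] d_g[of "Suc i"] by (auto simp: doubleton_eq_iff)
  qed
  ultimately show "is_path_graph V E"
    unfolding is_path_graph_def by blast
qed

lemma is_path_graph_iff_inj_on_hop:
  assumes "finite V" and "V \<noteq> {}" and sc: "simple_connected_graph V E"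
  shows "is_path_graph V E \<longleftrightarrow> (\<exists>A\<in>V. inj_on (\<lambda>v. hop E v A) V)"
proof
  have sg: "simple_graph V E"
    using sc by (simp add: simple_connected_graph_def)
  assume "is_path_graph V E"
  then obtain d where bij: "bij_betw d V {..<card V}"
    and edges: "\<And>u v. E u v \<longleftrightarrow> u \<in> V \<and> v \<in> V \<and> (d v = Suc (d u) \<or> d u = Suc (d v))"
    unfolding is_path_graph_iff_levels by blast
  have level: "\<exists>v\<in>V. d v = k" if "k < card V" for k
    using bij_betw_imp_surj_on[OF bij] that by (metis image_iff lessThan_iff)
  have "0 < card V"
    using assms(1,2) by (simp add: card_gt_0_iff)
  then obtain A where A: "A \<in> V" "d A = 0"
    using level by blast
  have inj: "inj_on d V"
    using bij by (rule bij_betw_imp_inj_on)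
  have "distance_labelling V E A d"
    unfolding distance_labelling_def
  proof (intro conjI ballI impI)
    show "v = A" if "v \<in> V" "d v = 0" for v
      using inj A that by (metis inj_onD)
    show "\<exists>w\<in>V. E v w \<and> d w + 1 = d v" if "v \<in> V" "0 < d v" for v
    proof -
      have "d v - 1 < card V"
        using bij_betw_apply[OF bij \<open>v \<in> V\<close>] by simp
      then obtain w where "w \<in> V" "d w = d v - 1"
        using level by blast
      with that show ?thesis
        using edges[of v w] by auto
    qed
  qed (use A edges in auto)
  then have "inj_on (\<lambda>v. hop E v A) V"
    using inj hop_eq_distance_labelling[OF sg] inj_on_cong by (metis (mono_tags, lifting))
  with A show "\<exists>A\<in>V. inj_on (\<lambda>v. hop E v A) V" by blast
next
  have sg: "simple_graph V E"
    using sc by (simp add: simple_connected_graph_def)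
  assume "\<exists>A\<in>V. inj_on (\<lambda>v. hop E v A) V"
  then obtain A where "A \<in> V" and inj: "inj_on (\<lambda>v. hop E v A) V" by blast
  define d where "d = (\<lambda>v. hop E v A)"
  have dl: "distance_labelling V E A d"
    using distance_labelling_hop[OF sc \<open>A \<in> V\<close>] by (simp add: d_def)
  have "card (d ` V) = card V"
    using card_image inj by (simp add: d_def)
  then have "d ` V = {..<card V}"
    using image_distance_labelling[OF \<open>finite V\<close> dl] by simp
  then have "bij_betw d V {..<card V}"
    using inj by (simp add: bij_betw_def d_def)
  then show "is_path_graph V E"
    unfolding is_path_graph_iff_levels
    using adjacent_iff_consecutive_levels[OF sg dl] inj by (auto simp: d_def)
qed

lemma construction_set_vertex_list:
  assumes "simple_connected_graph V E" and "distinct vs" and "set vs = V" and "V \<noteq> {}"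
  shows "construction_set V E vs"
  unfolding construction_set_def
proof (intro conjI allI impI)
  show "vs \<noteq> []" "distinct vs" "set vs \<subseteq> V"
    using assms(2-4) by auto
  fix E' assume E': "simple_connected_graph V E' \<and> (\<forall>i\<in>V. dist_vec E' vs i = dist_vec E vs i)"
  then have hops: "hop E' u v = hop E u v" if "u \<in> V" "v \<in> V" for u v
    using assms(3) that by (auto simp: dist_vec_def)
  show "E' = E"
  proof (intro ext)
    fix u v
    show "E' u v = E u v"
      using adjacent_iff_hop_eq_1[OF assms(1), of u v] adjacent_iff_hop_eq_1[of V E' u v] E' hops
      by auto
  qed
qed

lemma link_dim_eq_1_iff:
  assumes "finite V" and "V \<noteq> {}" and sc: "simple_connected_graph V E"
  shows "link_dim V E = 1 \<longleftrightarrow> (\<exists>A. construction_set V E [A])"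
proof
  obtain vs where "distinct vs" "set vs = V"
    using finite_distinct_list[OF \<open>finite V\<close>] by blast
  then have "\<exists>m M. construction_set V E M \<and> length M = m"
    using construction_set_vertex_list[OF sc] assms(2) by blast
  then have "\<exists>M. construction_set V E M \<and> length M = link_dim V E"
    unfolding link_dim_def by (rule LeastI_ex)
  moreover assume "link_dim V E = 1"
  ultimately show "\<exists>A. construction_set V E [A]"
    by (metis length_0_conv length_Suc_conv One_nat_def)
next
  assume "\<exists>A. construction_set V E [A]"
  then have "\<exists>M. construction_set V E M \<and> length M = 1"
    by force
  moreover have "1 \<le> length M" if "construction_set V E M" for M
    using that by (simp add: construction_set_def Suc_le_eq)
  ultimately show "link_dim V E = 1"
    unfolding link_dim_def by (intro Least_equality) blast+
qed

theorem proposition1: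
  fixes V :: "'a set" and E :: "'a \<Rightarrow> 'a \<Rightarrow> bool"
  assumes "finite V" and "card V \<ge> 2" and "simple_connected_graph V E"
  shows "link_dim V E = 1 \<longleftrightarrow> is_path_graph V E"
proof -
  have "V \<noteq> {}"
    using assms(2) by auto
  have "link_dim V E = 1 \<longleftrightarrow> (\<exists>A. construction_set V E [A])"
    using link_dim_eq_1_iff[OF assms(1) \<open>V \<noteq> {}\<close> assms(3)] .
  also have "\<dots> \<longleftrightarrow> (\<exists>A\<in>V. inj_on (\<lambda>v. hop E v A) V)"
    using construction_set_singleton_iff[OF assms(3)] by blast
  also have "\<dots> \<longleftrightarrow> is_path_graph V E"
    using is_path_graph_iff_inj_on_hop[OF assms(1) \<open>V \<noteq> {}\<close> assms(3)] by blast
  finally show ?thesis .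
qed

end
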